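(* Let $n$ be primover to base $2$. Then $2^n-1$ is primover to base $2$ if and only if $n$ is prime.
   Context: For an integer $a>1$ and an odd integer $n>1$ with $\gcd(a,n)=1$: $h_a(n)$ denotes the multiplicative order of $a$ modulo $n$. A cyclotomic coset of $a$ modulo $n$ is a set of the form $\{\, s a^j \bmod n : j\ge 0\,\}$ with $s\in\{1,\dots,n-1\}$; these cosets partition $\{1,\dots,n-1\}$, and $r_a(n)$ denotes the number of distinct cyclotomic cosets of $a$ modulo $n$. An odd composite number $n$ coprime to $a$ is called an overpseudoprime to base $a$ if $n=r_a(n)\,h_a(n)+1$. An integer $N>1$ is called primover to base $a$ if it is either prime or an overpseudoprime to base $a$. *)

theory Defs
  imports "HOL-Number_Theory.Number_Theory"
begin

definition h_ord :: "nat \<Rightarrow> nat \<Rightarrow> nat" where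
  "h_ord a n = ord n a"

definition cyc_coset :: "nat \<Rightarrow> nat \<Rightarrow> nat \<Rightarrow> nat set" where
  "cyc_coset a n s = {(s * a ^ j) mod n | j. True}"

definition r_cos :: "nat \<Rightarrow> nat \<Rightarrow> nat" where
  "r_cos a n = card (cyc_coset a n ` {1..n-1})"

definition overpseudoprime :: "nat \<Rightarrow> nat \<Rightarrow> bool" where
  "overpseudoprime a n \<longleftrightarrow> odd n \<and> n > 1 \<and> \<not> prime n \<and> coprime a n \<and>
     n = r_cos a n * h_ord a n + 1"

definition primover :: "nat \<Rightarrow> nat \<Rightarrow> bool" where
  "primover a N \<longleftrightarrow> N > 1 \<and> (prime N \<or> overpseudoprime a N)"

end

(* The cyclotomic coset of s modulo M has exactly ord (M div gcd s M) b elements, a divisor of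
   h = ord M b.  The cosets partition {1..M-1}, so M - 1 = r h holds iff every coset has full size h;
   for prime M this is automatic, hence M is primover iff all its cosets are full.
   For M = 2^n - 1 we have h = n.  If n is prime, every coset size is a divisor of n other than 1
   (as 2 is not 1 modulo any divisor > 1 of M), hence n.  If n has a proper divisor a > 1, then
   2^a - 1 divides M and the coset of M div (2^a - 1) has only a elements. *)

theory Submission
  imports Defs
begin

lemma cong_mult_left_iff_cong_div_gcd:
  fixes s x y M :: nat
  assumes "0 < M"
  shows "[s * x = s * y] (mod M) \<longleftrightarrow> [x = y] (mod M div gcd s M)"
proof -
  define g where "g = gcd s M"
  have "0 < g" using assms by (simp add: g_def)
  have s: "s = g * (s div g)" and M: "M = g * (M div g)" by (simp_all add: g_def)
  have cop: "coprime (s div g) (M div g)"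
    using div_gcd_coprime[of s M] assms by (simp add: g_def)
  have "[s * x = s * y] (mod M) \<longleftrightarrow> [g * (s div g * x) = g * (s div g * y)] (mod g * (M div g))"
    using s M by (metis mult.assoc)
  also have "\<dots> \<longleftrightarrow> [s div g * x = s div g * y] (mod M div g)"
    using \<open>0 < g\<close> by (simp add: cong_def mod_mult_mult1)
  also have "\<dots> \<longleftrightarrow> [x = y] (mod M div g)"
    using cop by (rule cong_mult_lcancel_nat)
  finally show ?thesis by (simp add: g_def)
qed

lemma coprime_div_gcd_if_coprime:
  fixes b s M :: nat
  assumes "coprime b M"
  shows "coprime (M div gcd s M) b"
proof (rule coprime_divisors[OF _ dvd_refl assms[unfolded coprime_commute[of b]]])
  show "M div gcd s M dvd M" by (metis dvd_mult_div_cancel gcd_dvd2 dvd_triv_right)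
qed

lemma cong_mult_pow_iff:
  fixes b s i j M :: nat
  assumes "coprime b M" "0 < M"
  shows "[s * b ^ i = s * b ^ j] (mod M) \<longleftrightarrow> [i = j] (mod ord (M div gcd s M) b)"
proof -
  have "coprime (M div gcd s M) b"
    using assms(1) by (rule coprime_div_gcd_if_coprime)
  then show ?thesis
    using assms(2) by (simp add: cong_mult_left_iff_cong_div_gcd order_divides_expdiff)
qed

lemma cyc_coset_eq_image:
  assumes "coprime b M" "0 < M"
  shows "cyc_coset b M s = (\<lambda>j. s * b ^ j mod M) ` {..<ord (M div gcd s M) b}"
    (is "_ = ?f ` {..<?d}")
proof
  have "0 < ?d"
    using coprime_div_gcd_if_coprime[OF assms(1)] by simp
  show "cyc_coset b M s \<subseteq> ?f ` {..<?d}"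
  proof
    fix x assume "x \<in> cyc_coset b M s"
    then obtain j where x: "x = ?f j" by (auto simp: cyc_coset_def)
    have "[s * b ^ j = s * b ^ (j mod ?d)] (mod M)"
      using cong_mult_pow_iff[OF assms, of s j "j mod ?d"] by (simp add: cong_def)
    then have "x = ?f (j mod ?d)" using x by (simp add: cong_def)
    then show "x \<in> ?f ` {..<?d}" using \<open>0 < ?d\<close> by simp
  qed
qed (auto simp: cyc_coset_def)

lemma card_cyc_coset:
  assumes "coprime b M" "0 < M"
  shows "card (cyc_coset b M s) = ord (M div gcd s M) b"
proof -
  let ?d = "ord (M div gcd s M) b"
  have "inj_on (\<lambda>j. s * b ^ j mod M) {..<?d}"
  proof (rule inj_onI)
    fix i j assume "i \<in> {..<?d}" "j \<in> {..<?d}" "s * b ^ i mod M = s * b ^ j mod M"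
    then show "i = j"
      using assms cong_less_modulus_unique_nat by (auto simp: cong_mult_pow_iff cong_def[symmetric])
  qed
  then show ?thesis by (simp add: cyc_coset_eq_image[OF assms] card_image)
qed

lemma ord_dvd_ord_if_dvd:
  fixes b m M :: nat
  assumes "m dvd M"
  shows "ord m b dvd ord M b"
proof -
  have "[b ^ ord M b = 1] (mod m)"
    using ord_works assms by (rule cong_dvd_modulus_nat[OF conjunct1])
  then show ?thesis unfolding ord_divides .
qed

lemma card_cyc_coset_dvd_ord:
  assumes "coprime b M" "0 < M"
  shows "card (cyc_coset b M s) dvd ord M b"
proof -
  have "M div gcd s M dvd M" by (metis dvd_mult_div_cancel gcd_dvd2 dvd_triv_right)
  then show ?thesis unfolding card_cyc_coset[OF assms] by (rule ord_dvd_ord_if_dvd)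
qed

lemma cyc_coset_subset:
  assumes "coprime b M" "s \<in> {1..M-1}"
  shows "cyc_coset b M s \<subseteq> {1..M-1}"
proof
  fix x assume "x \<in> cyc_coset b M s"
  then obtain j where x: "x = s * b ^ j mod M" by (auto simp: cyc_coset_def)
  have "\<not> M dvd s * b ^ j"
  proof
    assume "M dvd s * b ^ j"
    moreover have "coprime M (b ^ j)" using assms(1) by (simp add: coprime_commute)
    ultimately have "M dvd s" using coprime_dvd_mult_left_iff by blast
    then show False using assms(2) by (auto dest: dvd_imp_le)
  qed
  then have "x \<noteq> 0" using x by (simp add: dvd_eq_mod_eq_0)
  moreover have "x < M" using x assms(2) by (cases M) auto
  ultimately show "x \<in> {1..M-1}" by simp
qed

lemma cyc_coset_eq_if_mem:
  assumes "coprime b M" "0 < M" "t \<in> cyc_coset b M s"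
  shows "cyc_coset b M t = cyc_coset b M s"
proof -
  let ?d = "ord (M div gcd s M) b"
  obtain j where "t = s * b ^ j mod M" using assms(3) by (auto simp: cyc_coset_def)
  then have shift: "t * b ^ k mod M = s * b ^ (j + k) mod M" for k
    by (simp add: mod_mult_left_eq power_add mult.assoc)
  have "0 < ?d"
    using coprime_div_gcd_if_coprime[OF assms(1)] by simp
  have "s * b ^ k mod M \<in> cyc_coset b M t" for k
  proof -
    \<comment> \<open>exponents only matter modulo \<open>?d\<close>, so the shift \<open>(?d - 1) * j + k\<close> undoes the \<open>j\<close> in \<open>t\<close>\<close>
    have wrap: "j + ((?d - 1) * j + k) = k + ?d * j"
      using \<open>0 < ?d\<close> by (cases ?d) simp_all
    have "[k + ?d * j = k] (mod ?d)" by (simp add: cong_def)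
    then have "s * b ^ (k + ?d * j) mod M = s * b ^ k mod M"
      using cong_mult_pow_iff[OF assms(1,2)] by (simp add: cong_def)
    then have "t * b ^ ((?d - 1) * j + k) mod M = s * b ^ k mod M"
      by (simp only: shift wrap)
    then show ?thesis unfolding cyc_coset_def by (auto intro!: exI[of _ "(?d - 1) * j + k"])
  qed
  then show ?thesis using shift by (auto simp: cyc_coset_def)
qed

lemma sum_card_cyc_cosets:
  assumes "coprime b M" "0 < M"
  shows "(\<Sum>C \<in> cyc_coset b M ` {1..M-1}. card C) = M - 1"
proof -
  let ?C = "cyc_coset b M ` {1..M-1}"
  have "x \<in> cyc_coset b M x" if "x \<in> {1..M-1}" for x
    using that by (auto simp: cyc_coset_def intro: exI[of _ 0])
  then have cover: "\<Union> ?C = {1..M-1}"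
    using cyc_coset_subset[OF assms(1)] by blast
  have "pairwise disjnt ?C"
    unfolding pairwise_def disjnt_def
    using cyc_coset_eq_if_mem[OF assms] by blast
  then have "card (\<Union> ?C) = (\<Sum>C \<in> ?C. card C)"
    by (rule card_Union_disjoint) (auto simp: cyc_coset_eq_image[OF assms])
  then show ?thesis using cover by simp
qed

lemma r_cos_equation_iff:
  assumes "coprime b M" "0 < M"
  shows "M = r_cos b M * ord M b + 1 \<longleftrightarrow> (\<forall>s \<in> {1..M-1}. card (cyc_coset b M s) = ord M b)"
proof -
  let ?C = "cyc_coset b M ` {1..M-1}"
  have r_cos: "r_cos b M * ord M b = (\<Sum>C \<in> ?C. ord M b)"
    by (simp add: r_cos_def)
  have le: "card C \<le> ord M b" if "C \<in> ?C" for C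
    using that card_cyc_coset_dvd_ord[OF assms] assms(1)
    by (auto intro: dvd_imp_le simp: coprime_commute)
  show ?thesis
  proof
    assume eq: "M = r_cos b M * ord M b + 1"
    show "\<forall>s \<in> {1..M-1}. card (cyc_coset b M s) = ord M b"
    proof (rule ccontr)
      assume "\<not> ?thesis"
      then obtain s where "s \<in> {1..M-1}" "card (cyc_coset b M s) \<noteq> ord M b" by blast
      then have "\<exists>C \<in> ?C. card C < ord M b" using le by (meson image_eqI le_neq_implies_less)
      then have "(\<Sum>C \<in> ?C. card C) < (\<Sum>C \<in> ?C. ord M b)"
        using le by (intro sum_strict_mono_ex1) auto
      then show False using eq r_cos sum_card_cyc_cosets[OF assms] by simp
    qed
  next
    assume "\<forall>s \<in> {1..M-1}. card (cyc_coset b M s) = ord M b"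
    then have "(\<Sum>C \<in> ?C. card C) = (\<Sum>C \<in> ?C. ord M b)"
      by (intro sum.cong) auto
    then show "M = r_cos b M * ord M b + 1"
      using r_cos sum_card_cyc_cosets[OF assms] assms(2) by linarith
  qed
qed

lemma primover_iff_r_cos_equation:
  assumes "odd M" "1 < M" "coprime b M"
  shows "primover b M \<longleftrightarrow> M = r_cos b M * h_ord b M + 1"
proof (cases "prime M")
  case True
  have full: "card (cyc_coset b M s) = ord M b" if "s \<in> {1..M-1}" for s
  proof -
    have "coprime M s" using True that by (intro prime_imp_coprime) (auto dest: dvd_imp_le)
    then show ?thesis using card_cyc_coset assms by (simp add: coprime_commute)
  qed
  have "0 < M" using assms(2) by simp
  then have "M = r_cos b M * h_ord b M + 1"
    unfolding h_ord_def using r_cos_equation_iff[OF assms(3)] full by blast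
  then show ?thesis using True assms(2) by (simp add: primover_def)
next
  case False
  then show ?thesis using assms by (auto simp: primover_def overpseudoprime_def)
qed

lemma coprime_mersenne:
  fixes b n :: nat
  assumes "0 < b" "0 < n"
  shows "coprime b (b ^ n - 1)"
  using coprime_diff_one_right_nat[of "b ^ n"] assms by simp

lemma ord_mersenne:
  fixes b n :: nat
  assumes "1 < b"
  shows "ord (b ^ n - 1) b = n"
proof (cases "n = 0")
  case True
  then show ?thesis using assms by simp
next
  case False
  let ?M = "b ^ n - 1" and ?k = "ord (b ^ n - 1) b"
  have "[b ^ n = 1] (mod ?M)" using assms by (simp add: cong_altdef_nat)
  then have "?k dvd n" by (simp only: ord_divides)
  then have "?k \<le> n" using False by (simp add: dvd_imp_le)
  moreover have "\<not> ?k < n"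
  proof
    assume "?k < n"
    have "0 < ?k" using coprime_mersenne[of b n] assms False by (simp add: coprime_commute)
    have "[b ^ ?k = 1] (mod ?M)" by (rule conjunct1[OF ord_works])
    then have "?M dvd b ^ ?k - 1" using assms by (simp add: cong_altdef_nat)
    moreover have "b ^ ?k - 1 < ?M"
      using \<open>?k < n\<close> assms power_strict_increasing[of ?k n b] by (simp add: diff_less_mono)
    moreover have "0 < b ^ ?k - 1"
      using one_less_power[OF assms \<open>0 < ?k\<close>] by simp
    ultimately show False by (simp add: nat_dvd_not_less)
  qed
  ultimately show ?thesis by simp
qed

lemma mersenne_dvd_mersenne:
  fixes b a n :: nat
  assumes "0 < b" "a dvd n"
  shows "b ^ a - 1 dvd b ^ n - 1"
proof -
  obtain c where n: "n = a * c" using assms(2) by blast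
  have "[b ^ a = 1] (mod b ^ a - 1)" using assms(1) by (simp add: cong_altdef_nat)
  then have "[(b ^ a) ^ c = 1 ^ c] (mod b ^ a - 1)" by (rule cong_pow)
  then show ?thesis using assms(1) by (simp add: n power_mult cong_altdef_nat)
qed

lemma card_cyc_coset_mersenne_cofactor:
  fixes b a n :: nat
  assumes "1 < b" "a dvd n" "0 < n"
  shows "card (cyc_coset b (b ^ n - 1) ((b ^ n - 1) div (b ^ a - 1))) = a"
proof -
  define M D where "M = b ^ n - 1" and "D = b ^ a - 1"
  have "0 < M" using assms one_less_power[of b n] by (simp add: M_def)
  have "0 < a" using assms(2,3) by (rule dvd_pos_nat[rotated])
  then have "0 < D" using assms one_less_power[of b a] by (simp add: D_def)
  have M: "M = (M div D) * D"
    using mersenne_dvd_mersenne[of b a n] assms by (simp add: M_def D_def)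
  then have "gcd (M div D) M = M div D" by (metis dvd_triv_left gcd_nat.absorb1)
  moreover have "M div (M div D) = D"
    using M \<open>0 < M\<close> \<open>0 < D\<close> by (metis div_mult_self1_is_m nonzero_mult_div_cancel_left mult_is_0 neq0_conv)
  ultimately show ?thesis
    using card_cyc_coset[of b M] coprime_mersenne[of b n] \<open>0 < M\<close> assms ord_mersenne[of b a]
    by (simp add: M_def D_def)
qed

lemma mersenne_cofactor_bounds:
  fixes b a n :: nat
  assumes "0 < b" "a dvd n" "0 < n" "1 < b ^ a - 1"
  shows "(b ^ n - 1) div (b ^ a - 1) \<in> {1..b ^ n - 2}"
proof -
  have "b ^ a - 1 dvd b ^ n - 1" using assms(1,2) by (rule mersenne_dvd_mersenne)
  moreover have "0 < b ^ n - 1"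
    using assms(1,4) power_increasing[of a n b] dvd_imp_le[OF assms(2,3)] by simp
  ultimately have "b ^ a - 1 \<le> b ^ n - 1" by (rule dvd_imp_le)
  then have "0 < (b ^ n - 1) div (b ^ a - 1)"
    using assms(4) by (simp add: div_greater_zero_iff)
  moreover have "(b ^ n - 1) div (b ^ a - 1) < b ^ n - 1"
    using assms(4) \<open>0 < b ^ n - 1\<close> by (rule div_less_dividend)
  ultimately show ?thesis by simp
qed

lemma composite_exponent_imp_short_cyc_coset:
  fixes b n :: nat
  assumes "1 < b" "2 \<le> n" "\<not> prime n"
  shows "\<exists>s \<in> {1..b ^ n - 2}. card (cyc_coset b (b ^ n - 1) s) < n"
proof -
  obtain a where "a dvd n" "a \<noteq> 1" "a \<noteq> n"
    using assms(2,3) by (auto simp: prime_nat_iff)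
  moreover have "0 < a" using dvd_pos_nat[of n a] \<open>a dvd n\<close> assms(2) by simp
  ultimately have "1 < a" "a < n" using dvd_imp_le[of a n] assms(2) by auto
  have "b < b ^ a" using power_strict_increasing[OF \<open>1 < a\<close> assms(1)] by simp
  then have "1 < b ^ a - 1" using assms(1) by simp
  define s where "s = (b ^ n - 1) div (b ^ a - 1)"
  have "s \<in> {1..b ^ n - 2}"
    unfolding s_def using assms(1,2) \<open>a dvd n\<close> \<open>1 < b ^ a - 1\<close>
    by (intro mersenne_cofactor_bounds) simp_all
  moreover have "card (cyc_coset b (b ^ n - 1) s) = a"
    unfolding s_def using assms(1,2) \<open>a dvd n\<close> by (intro card_cyc_coset_mersenne_cofactor) simp_all
  ultimately show ?thesis using \<open>a < n\<close> by (intro bexI[of _ s]) simp_all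
qed

lemma card_cyc_coset_eq_prime_ord:
  fixes M s :: nat
  assumes "prime (ord M 2)" "s \<in> {1..M-1}"
  shows "card (cyc_coset 2 M s) = ord M 2"
proof -
  have "coprime 2 M" using prime_gt_0_nat[OF assms(1)] by (simp add: coprime_commute)
  have "0 < M" using assms(2) by (cases M) auto
  define M' where "M' = M div gcd s M"
  have "s < M" using assms(2) by (cases M) auto
  moreover have "gcd s M \<le> s" using assms(2) by (intro gcd_le1_nat) simp
  moreover have "M = gcd s M * M'" by (simp add: M'_def)
  ultimately have "1 < M'"
    by (metis le_less_trans less_one mult_0_right mult.right_neutral nat_neq_iff not_less_zero)
  then have "ord M' 2 \<noteq> 1"
    by (auto simp: ord_eq_Suc_0_iff cong_altdef_nat)
  moreover have "ord M' 2 dvd ord M 2"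
    unfolding M'_def by (rule ord_dvd_ord_if_dvd) (metis dvd_mult_div_cancel gcd_dvd2 dvd_triv_right)
  ultimately have "ord M' 2 = ord M 2"
    using assms(1) by (metis One_nat_def prime_nat_iff)
  then show ?thesis
    using card_cyc_coset[OF \<open>coprime 2 M\<close> \<open>0 < M\<close>] by (simp add: M'_def)
qed

theorem theorem3:
  fixes n :: nat
  assumes "primover 2 n"
  shows "primover 2 (2 ^ n - 1) \<longleftrightarrow> prime n"
proof -
  define M :: nat where "M = 2 ^ n - 1"
  have "2 \<le> n" using assms by (simp add: primover_def)
  then have "(2::nat) ^ 2 \<le> 2 ^ n" by (rule power_increasing) simp
  then have "1 < M" "odd M" "coprime 2 M"
    using coprime_mersenne[of 2 n] \<open>2 \<le> n\<close> by (auto simp: M_def)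
  have ord: "ord M 2 = n" unfolding M_def by (rule ord_mersenne) simp
  have "primover 2 M \<longleftrightarrow> (\<forall>s \<in> {1..M-1}. card (cyc_coset 2 M s) = n)"
    using primover_iff_r_cos_equation r_cos_equation_iff \<open>1 < M\<close> \<open>odd M\<close> \<open>coprime 2 M\<close>
    by (simp add: h_ord_def ord)
  also have "\<dots> \<longleftrightarrow> prime n"
  proof
    assume full: "\<forall>s \<in> {1..M-1}. card (cyc_coset 2 M s) = n"
    show "prime n"
    proof (rule ccontr)
      assume "\<not> prime n"
      then show False
        using composite_exponent_imp_short_cyc_coset[of 2 n] full \<open>2 \<le> n\<close> by (auto simp: M_def)
    qed
  next
    assume "prime n"
    then show "\<forall>s \<in> {1..M-1}. card (cyc_coset 2 M s) = n"
      using card_cyc_coset_eq_prime_ord ord by auto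
  qed
  finally show ?thesis by (simp add: M_def)
qed

end
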